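(* Let $e\in\mathbb{Z}/2$ and $n\in2\mathbb{N}$. Then $\sum_{\Delta\in{}^{\gamma_e}\mathfrak{A}^n_0}(-1)^{{}^ej_\Delta}$ equals $0$ if $n\ge4$, equals $-1$ if $n=2$, and equals $1$ if $n=0$.
   Context: $k$ is an algebraic closure of $\mathbb{F}_q$, $q$ odd; $k^\triangle=k\setminus\{0,1,-1\}$. Define permutations of $k^\triangle$: $\alpha(\lambda)=\lambda^{-1}$, $\beta(\lambda)=-\lambda$, $\gamma(\lambda)=\lambda^q$, and $\gamma_e=\beta^e\gamma$ for $e\in\mathbb{Z}/2$. $\Omega_{\alpha,\gamma_e}$ is the set of orbits on $k^\triangle$ of the group generated by $\alpha,\gamma_e$; $\Omega'_{\alpha,\gamma_e}$ is the set of those orbits which are a single $\gamma_e$-orbit. For a monic $\Delta\in k[X]$ with $\Delta(0)\ne0$, write $\Delta=\prod_{\lambda\in k^*}(X-\lambda)^{n^\Delta_\lambda}$. $\mathfrak{A}^n_0$ is the set of such $\Delta$ of degree $n$ with $n^\Delta_{\lambda^{-1}}=n^\Delta_\lambda$ for all $\lambda$ and $n^\Delta_1=n^\Delta_{-1}=0$; ${}^{\gamma_e}\mathfrak{A}^n_0$ is the subset with $n^\Delta_{\gamma_e(\lambda)}=n^\Delta_\lambda$ for all $\lambda\in k^\triangle$. For such $\Delta$ and an orbit $\mathcal{O}\in\Omega_{\alpha,\gamma_e}$, $n^\Delta_{\mathcal{O}}$ is the common value of $n^\Delta_\lambda$, $\lambda\in\mathcal{O}$, and ${}^ej_\Delta=\sum_{\mathcal{O}\in\Omega'_{\alpha,\gamma_e}}n^\Delta_{\mathcal{O}}\in\mathbb{Z}/2$.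 *)

theory Defs
  imports "HOL-Computational_Algebra.Polynomial"
begin

definition ktri :: "'k::field set" where
  "ktri = UNIV - {0, 1, -1}"

text \<open>alpha(l) = l^-1; gamma_e = beta^e gamma, gamma_e(l) = (-1)^e l^q.\<close>
definition alpha :: "'k::field \<Rightarrow> 'k" where
  "alpha l = inverse l"

definition gamma_e :: "nat \<Rightarrow> nat \<Rightarrow> 'k::field \<Rightarrow> 'k" where
  "gamma_e q e l = (-1) ^ e * l ^ q"

text \<open>Orbit of l under the group generated by alpha and gamma_e (these commute,
 and gamma_e has finite orbits, so nonnegative powers suffice).\<close>
definition orb_ag :: "nat \<Rightarrow> nat \<Rightarrow> 'k::field \<Rightarrow> 'k set" where
  "orb_ag q e l = {((gamma_e q e) ^^ b) l | b. True} \<union> {alpha (((gamma_e q e) ^^ b) l) | b. True}"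

definition orb_g :: "nat \<Rightarrow> nat \<Rightarrow> 'k::field \<Rightarrow> 'k set" where
  "orb_g q e l = {((gamma_e q e) ^^ b) l | b. True}"

definition Omega :: "nat \<Rightarrow> nat \<Rightarrow> 'k::field set set" where
  "Omega q e = {orb_ag q e l | l. l \<in> ktri}"

definition Omega' :: "nat \<Rightarrow> nat \<Rightarrow> 'k::field set set" where
  "Omega' q e = {Ob \<in> Omega q e. \<exists>l\<in>Ob. Ob = orb_g q e l}"

definition nmult :: "'k::field poly \<Rightarrow> 'k \<Rightarrow> nat" where
  "nmult D l = order l D"

definition A0 :: "nat \<Rightarrow> 'k::field poly set" where
  "A0 n = {D. lead_coeff D = 1 \<and> degree D = n \<and> poly D 0 \<noteq> 0 \<and>
      (\<forall>l. l \<noteq> 0 \<longrightarrow> nmult D (inverse l) = nmult D l) \<and>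
      nmult D 1 = 0 \<and> nmult D (-1) = 0}"

definition gA0 :: "nat \<Rightarrow> nat \<Rightarrow> nat \<Rightarrow> 'k::field poly set" where
  "gA0 q e n = {D \<in> A0 n. \<forall>l\<in>ktri. nmult D (gamma_e q e l) = nmult D l}"

text \<open>n^Delta_O, the common value on the orbit (via a representative).\<close>
definition nO :: "'k::field poly \<Rightarrow> 'k set \<Rightarrow> nat" where
  "nO D Ob = nmult D (SOME l. l \<in> Ob)"

text \<open>{}^e j_Delta, as a natural number whose parity is the element of Z/2;
  only orbits with nonzero multiplicity contribute (finitely many).\<close>
definition jD :: "nat \<Rightarrow> nat \<Rightarrow> 'k::field poly \<Rightarrow> nat" where
  "jD q e D = (\<Sum>Ob\<in>{Ob \<in> Omega' q e. nO D Ob \<noteq> 0}. nO D Ob)"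

text \<open>k is an algebraic closure of F_q: characteristic p, q = p^m,
 algebraically closed, and algebraic over the prime field.\<close>
definition alg_closure_of_Fq :: "'k::field itself \<Rightarrow> nat \<Rightarrow> bool" where
  "alg_closure_of_Fq _ q \<longleftrightarrow>
     (\<exists>p m. prime p \<and> m > 0 \<and> q = p ^ m \<and> CHAR('k) = p) \<and>
     (\<forall>P :: 'k poly. degree P \<ge> 1 \<longrightarrow> (\<exists>x. poly P x = 0)) \<and>
     (\<forall>x :: 'k. \<exists>r > 0. x ^ (q ^ r) = x)"

end

(*
  Sending Delta to its multiset of roots identifies the polynomials in question with the
  multisets of size n on k^triangle that are invariant under alpha and gamma_e, i.e. with the
  ways of giving each orbit O in Omega_{alpha,gamma_e} a multiplicity.  With eps_O = -1 for
  O in Omega' and eps_O = 1 otherwise, the signed count a_n therefore has generating function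
  prod_O (1 - eps_O t^|O|)^(-1), and its logarithmic derivative gives the Newton identity
  n a_n = sum_{k=1..n} a_(n-k) p_k, where p_k = sum_{|O| divides k} |O| eps_O^(k/|O|).
  All orbits have even size, so p_k = 0 for odd k.  For k = 2N a point l contributes +1 if
  gamma_e^N l = l and -1 if gamma_e^N l = 1/l; with Q = q^N and c = (-1)^(eN) these points are
  the roots of x^(Q-1) = c and of x^(Q+1) = c outside {0, 1, -1}.  Both polynomials are
  separable because Q = 0 in k, and 1, -1 are roots of both or of neither, so
  p_2N = (Q - 1) - (Q + 1) = -2.  The Newton identity then forces sum_n a_n t^n = 1 - t^2.
*)
theory Submission
  imports Defs "HOL-Combinatorics.Cycles"
begin

section \<open>Polynomials with prescribed roots\<close>

definition poly_of_roots :: "'a::idom multiset \<Rightarrow> 'a poly" where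
  "poly_of_roots A = (\<Prod>x\<in>#A. [:-x, 1:])"

lemma poly_of_roots_empty [simp]: "poly_of_roots {#} = 1"
  by (simp add: poly_of_roots_def)

lemma poly_of_roots_add_mset [simp]:
  "poly_of_roots (add_mset x A) = [:-x, 1:] * poly_of_roots A"
  by (simp add: poly_of_roots_def del: mult_pCons_left)

lemma poly_of_roots_nonzero [simp]: "poly_of_roots A \<noteq> 0"
  by (induction A) (simp_all del: mult_pCons_left)

lemma lead_coeff_poly_of_roots [simp]: "lead_coeff (poly_of_roots A) = 1"
  by (induction A) (simp_all add: lead_coeff_mult del: mult_pCons_left)

lemma degree_poly_of_roots [simp]: "degree (poly_of_roots A) = size A"
  by (induction A) (simp_all add: degree_mult_eq del: mult_pCons_left)

lemma order_poly_of_roots [simp]: "order a (poly_of_roots A) = count A a"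
proof (induction A)
  case (add x A)
  have "order a [:-x, 1:] = (if a = x then 1 else 0)"
    using order_power_n_n[of a 1] by (auto intro: order_0I)
  with add show ?case
    by (simp add: order_mult del: mult_pCons_left)
qed (simp add: order_0I)

lemma poly_of_roots_eq_0_iff: "poly (poly_of_roots A) a = 0 \<longleftrightarrow> a \<in># A"
  using order_root[of "poly_of_roots A" a] by simp

lemma inj_poly_of_roots: "inj poly_of_roots"
  by (rule injI) (metis multiset_eqI order_poly_of_roots)

lemma monic_eq_poly_of_roots:
  fixes p :: "'a::field poly"
  assumes alg_closed: "\<And>P::'a poly. degree P \<ge> 1 \<Longrightarrow> \<exists>x. poly P x = 0"
    and "lead_coeff p = 1"
  shows "\<exists>A. p = poly_of_roots A"
  using assms(2)
proof (induction "degree p" arbitrary: p rule: less_induct)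
  case (less p)
  show ?case
  proof (cases "degree p = 0")
    case True
    then have "p = 1"
      using less.prems by (auto elim: degree_eq_zeroE simp: one_pCons)
    then show ?thesis
      by (intro exI[of _ "{#}"]) simp
  next
    case False
    then obtain x where "poly p x = 0"
      using alg_closed[of p] by auto
    then obtain r where p: "p = [:-x, 1:] * r"
      using poly_eq_0_iff_dvd by (blast elim: dvdE)
    then have "lead_coeff r = 1"
      using less.prems by (simp add: lead_coeff_mult del: mult_pCons_left)
    then have "r \<noteq> 0"
      by auto
    moreover have "degree r < degree p"
      using p \<open>r \<noteq> 0\<close> by (simp add: degree_mult_eq del: mult_pCons_left)
    ultimately obtain B where "r = poly_of_roots B"
      using less.hyps[of r] \<open>lead_coeff r = 1\<close> by blast
    then show ?thesis
      using p by (intro exI[of _ "add_mset x B"]) simp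
  qed
qed

lemma order_le_1_if_pderiv_nonzero:
  fixes p :: "'a::idom poly"
  assumes "poly (pderiv p) a \<noteq> 0"
  shows "order a p \<le> 1"
proof (rule ccontr)
  define u where "u = [:-a, 1:]"
  assume "\<not> order a p \<le> 1"
  then have "u ^ Suc 1 dvd p"
    unfolding u_def order_divides by linarith
  then obtain r where "p = u ^ Suc 1 * r"
    by (elim dvdE)
  then have "pderiv p = u ^ Suc 1 * pderiv r + smult (of_nat (Suc 1)) (r * u ^ 1)"
    unfolding u_def by (simp only: lemma_order_pderiv1)
  moreover have "poly u a = 0"
    by (simp add: u_def)
  ultimately have "poly (pderiv p) a = 0"
    by simp
  with assms show False
    by contradiction
qed

lemma card_pow_eq_const:
  fixes c :: "'a::field"
  assumes alg_closed: "\<And>P::'a poly. degree P \<ge> 1 \<Longrightarrow> \<exists>x. poly P x = 0"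
    and "c \<noteq> 0" and "of_nat m \<noteq> (0::'a)"
  shows "card {x. x ^ m = c} = m"
proof -
  define P where "P = monom 1 m + [:-c:]"
  have "m \<noteq> 0"
    using assms(3) by (metis of_nat_0)
  then have deg: "degree P = m"
    by (simp add: P_def degree_add_eq_left degree_monom_eq)
  moreover have "coeff [:-c:] m = 0"
    using \<open>m \<noteq> 0\<close> by (cases m) simp_all
  ultimately have "lead_coeff P = 1"
    by (simp add: P_def)
  then obtain A where A: "P = poly_of_roots A"
    using monic_eq_poly_of_roots[OF alg_closed] by blast
  have roots: "{x. x ^ m = c} = set_mset A"
    using poly_of_roots_eq_0_iff[of A] by (auto simp: A[symmetric] P_def poly_monom)
  have "count A x = 1" if "x \<in># A" for x
  proof -
    have "x ^ m = c"
      using roots that by blast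
    then have "x \<noteq> 0"
      using assms(2) \<open>m \<noteq> 0\<close> by auto
    then have "poly (pderiv P) x \<noteq> 0"
      using assms(3) by (simp add: P_def pderiv_add pderiv_monom poly_monom)
    then have "count A x \<le> 1"
      using order_le_1_if_pderiv_nonzero[of P x] by (simp add: A)
    moreover have "count A x > 0"
      using that by simp
    ultimately show ?thesis
      by linarith
  qed
  then have "size A = card (set_mset A)"
    unfolding size_multiset_overloaded_eq by simp
  then show ?thesis
    using deg A roots by simp
qed

lemma finite_pow_eq_self:
  assumes "m \<ge> 2"
  shows "finite {x::'a::field. x ^ m = x}"
proof -
  obtain k where "m = Suc (Suc k)"
    using assms by (metis add_2_eq_Suc le_Suc_ex)
  then have "coeff (monom 1 m - [:0, 1:]) m = (1::'a)"
    by (simp add: coeff_diff)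
  then have "monom 1 m - [:0, 1:] \<noteq> (0::'a poly)"
    by (metis coeff_0 zero_neq_one)
  moreover have "{x::'a. x ^ m = x} = {x. poly (monom 1 m - [:0, 1:]) x = 0}"
    by (simp add: poly_monom)
  ultimately show ?thesis
    using poly_roots_finite by metis
qed

lemma roots_pow_pred_succ_trivial:
  assumes "odd Q" and "Q \<ge> 2"
  shows "{x::'a::field. x ^ (Q - 1) = c} \<inter> {0, 1, -1} = {x. x ^ (Q + 1) = c} \<inter> {0, 1, -1}"
proof -
  have "even (Q - 1)" and "even (Q + 1)"
    using assms by simp_all
  then have pow_eq: "x ^ (Q - 1) = x ^ (Q + 1)" if "x \<in> {0, 1, -1}" for x :: 'a
    using that \<open>Q \<ge> 2\<close> by (auto simp: zero_power neg_one_even_power)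
  show ?thesis
  proof (intro set_eqI)
    fix x :: 'a
    show "x \<in> {x. x ^ (Q - 1) = c} \<inter> {0, 1, -1} \<longleftrightarrow> x \<in> {x. x ^ (Q + 1) = c} \<inter> {0, 1, -1}"
      using pow_eq[of x] by (cases "x \<in> {0, 1, -1}") simp_all
  qed
qed

lemma size_eq_sum_count: "finite S \<Longrightarrow> set_mset A \<subseteq> S \<Longrightarrow> size A = sum (count A) S"
  unfolding size_multiset_overloaded_eq
  by (rule sum.mono_neutral_left) (auto simp: not_in_iff)

lemma int_card_Diff:
  assumes "finite A"
  shows "int (card (A - B)) = int (card A) - int (card (A \<inter> B))"
proof -
  have "card (A \<inter> B) \<le> card A"
    using assms by (intro card_mono) auto
  then show ?thesis
    using assms by (simp add: card_Diff_subset_Int of_nat_diff)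
qed

lemma sum_indicator_le: "c \<le> n \<Longrightarrow> (\<Sum>j=1..n. if j \<le> c then 1 else 0 :: int) = int c"
proof -
  assume "c \<le> n"
  have "(\<Sum>j=1..n. if j \<le> c then 1 else 0 :: int) = (\<Sum>j\<in>{j \<in> {1..n}. j \<le> c}. 1)"
    by (rule sum.inter_filter[symmetric]) simp
  also have "{j \<in> {1..n}. j \<le> c} = {1..c}"
    using \<open>c \<le> n\<close> by auto
  finally show ?thesis
    by simp
qed

lemma sum_multiples:
  fixes f :: "nat \<Rightarrow> 'a::comm_monoid_add"
  assumes "c > 0"
  shows "(\<Sum>j=1..n. if j * c \<le> n then f (j * c) else 0) = (\<Sum>k=1..n. if c dvd k then f k else 0)"
proof -
  have image: "(\<lambda>j. j * c) ` {j \<in> {1..n}. j * c \<le> n} = {k \<in> {1..n}. c dvd k}"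
  proof (intro set_eqI iffI)
    fix k assume "k \<in> {k \<in> {1..n}. c dvd k}"
    then obtain j where "k = j * c" and "1 \<le> k" and "k \<le> n"
      by (auto elim!: dvdE simp: mult.commute)
    moreover from this have "1 \<le> j" and "j \<le> n"
      using assms by (auto simp: Suc_le_eq intro: order.trans[of j k n])
    ultimately have "j \<in> {j \<in> {1..n}. j * c \<le> n}"
      by auto
    then show "k \<in> (\<lambda>j. j * c) ` {j \<in> {1..n}. j * c \<le> n}"
      using \<open>k = j * c\<close> by blast
  qed (use assms in \<open>auto simp: Suc_le_eq\<close>)
  have inj: "inj_on (\<lambda>j. j * c) {j \<in> {1..n}. j * c \<le> n}"
    using assms by (auto simp: inj_on_def)
  have "(\<Sum>j=1..n. if j * c \<le> n then f (j * c) else 0) = (\<Sum>j\<in>{j \<in> {1..n}. j * c \<le> n}. f (j * c))"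
    by (rule sum.inter_filter[symmetric]) simp
  also have "\<dots> = (\<Sum>k\<in>(\<lambda>j. j * c) ` {j \<in> {1..n}. j * c \<le> n}. f k)"
    using sum.reindex[OF inj, of f] by (simp add: o_def)
  also have "\<dots> = (\<Sum>k\<in>{k \<in> {1..n}. c dvd k}. f k)"
    by (simp only: image)
  also have "\<dots> = (\<Sum>k=1..n. if c dvd k then f k else 0)"
    by (rule sum.inter_filter) simp
  finally show ?thesis .
qed

lemma dvd_if_mod_double_eq:
  fixes N h :: nat
  assumes "N mod (2 * h) = h"
  shows "h dvd N"
proof -
  have "N = N div (2 * h) * (2 * h) + h"
    using div_mult_mod_eq[of N "2 * h"] assms by simp
  also have "h dvd \<dots>"
    by (intro dvd_add dvd_mult dvd_triv_right dvd_refl)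
  finally show ?thesis .
qed

lemma signed_multiple_indicator:
  fixes h N :: nat
  assumes "h > 0"
  shows "(if 2 * h dvd 2 * N then (-1::int) ^ (2 * N div (2 * h)) else 0)
    = of_bool (N mod (2 * h) = 0) - of_bool (N mod (2 * h) = h)"
proof (cases "h dvd N")
  case True
  then obtain m where N: "N = h * m" ..
  have mod: "N mod (2 * h) = h * (m mod 2)"
    unfolding N by (metis mult.commute mult_mod_right)
  have "2 * N = 2 * h * m"
    by (simp add: N)
  then have "2 * h dvd 2 * N" and "2 * N div (2 * h) = m"
    using assms by simp_all
  then have lhs: "(if 2 * h dvd 2 * N then (-1::int) ^ (2 * N div (2 * h)) else 0) = (-1) ^ m"
    by (simp only: if_True)
  show ?thesis
  proof (cases "even m")
    case True
    then have "N mod (2 * h) = 0"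
      using mod by (simp add: even_iff_mod_2_eq_zero)
    with True assms show ?thesis
      unfolding lhs by simp
  next
    case False
    then have "N mod (2 * h) = h"
      using mod by (simp add: odd_iff_mod_2_eq_one)
    with False assms show ?thesis
      unfolding lhs by simp
  qed
next
  case False
  have "\<not> 2 * h dvd 2 * N"
    using False by simp
  moreover have "N mod (2 * h) \<noteq> 0"
    using False dvd_mult_right[of 2 h N] by (auto simp: dvd_eq_mod_eq_0)
  moreover have "N mod (2 * h) \<noteq> h"
    using False dvd_if_mod_double_eq by blast
  ultimately show ?thesis
    by (simp only: if_False)
qed

lemma newton_recurrence_unique:
  fixes a b p :: "nat \<Rightarrow> int"
  assumes "a 0 = b 0"
    and a: "\<And>n. n > 0 \<Longrightarrow> int n * a n = (\<Sum>k=1..n. a (n - k) * p k)"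
    and b: "\<And>n. n > 0 \<Longrightarrow> int n * b n = (\<Sum>k=1..n. b (n - k) * p k)"
  shows "a n = b n"
proof (induction n rule: less_induct)
  case (less n)
  show ?case
  proof (cases "n = 0")
    case False
    then have "int n * a n = int n * b n"
      using less by (simp add: a b)
    with False show ?thesis
      by simp
  qed (simp add: assms(1))
qed

section \<open>The twisted Frobenius map and its orbits\<close>

lemma funpow_mult_fixed: "(f ^^ n) x = x \<Longrightarrow> (f ^^ (n * m)) x = x"
  by (induction m) (simp_all add: funpow_add)

lemma involution_mult_eq_1_iff:
  fixes c y :: "'a::monoid_mult"
  assumes "c * c = 1"
  shows "c * y = 1 \<longleftrightarrow> y = c"
proof
  assume "c * y = 1"
  then have "(c * c) * y = c"
    by (simp add: mult.assoc)
  with assms show "y = c"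
    by simp
qed (use assms in simp)

lemma inverse_in_ktri:
  assumes "l \<in> ktri"
  shows "inverse l \<in> (ktri :: 'a::field set)"
proof -
  have "inverse l = -1 \<Longrightarrow> l = -1"
    by (metis inverse_inverse_eq inverse_minus_eq inverse_1)
  then show ?thesis
    using assms by (auto simp: ktri_def)
qed

lemma inverse_neq_self_ktri:
  assumes "l \<in> ktri"
  shows "inverse l \<noteq> (l::'a::field)"
proof
  assume "inverse l = l"
  moreover have "l \<noteq> 0"
    using assms by (simp add: ktri_def)
  ultimately have "l * l = 1"
    by (metis right_inverse)
  then have "(l - 1) * (l + 1) = 0"
    by (simp add: algebra_simps)
  then show False
    using assms by (auto simp: ktri_def eq_neg_iff_add_eq_0)
qed

(* of_nat q = 0 is all that is used of q being a power of the characteristic. *)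
locale twisted_frobenius =
  fixes q e :: nat and ty :: "'k::field itself"
  assumes odd_q: "odd q" and e_less_2: "e < 2" and of_nat_q: "of_nat q = (0::'k)"
    and alg_closed: "\<And>P::'k poly. degree P \<ge> 1 \<Longrightarrow> \<exists>x. poly P x = 0"
    and pow_periodic: "\<And>x::'k. \<exists>r>0. x ^ (q ^ r) = x"
begin

abbreviation \<gamma> :: "'k \<Rightarrow> 'k" where "\<gamma> \<equiv> gamma_e q e"

abbreviation period :: "'k \<Rightarrow> nat" where "period x \<equiv> least_power \<gamma> x"

lemma funpow_gamma: "(\<gamma> ^^ N) x = (-1) ^ (e * N) * x ^ (q ^ N)"
proof (induction N)
  case (Suc N)
  have "(\<gamma> ^^ Suc N) x = \<gamma> ((-1) ^ (e * N) * x ^ (q ^ N))"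
    using Suc by simp
  also have "\<dots> = (-1) ^ e * ((-1) ^ (e * N) * x ^ (q ^ N)) ^ q"
    by (simp only: gamma_e_def)
  also have "\<dots> = (-1) ^ e * ((-1) ^ (e * N)) ^ q * (x ^ (q ^ N)) ^ q"
    by (simp only: power_mult_distrib mult.assoc)
  also have "((-1::'k) ^ (e * N)) ^ q = ((-1) ^ q) ^ (e * N)"
    by (simp only: power_mult[symmetric] mult.commute)
  also have "(x ^ (q ^ N)) ^ q = x ^ (q ^ Suc N)"
    by (simp only: power_mult[symmetric] power_Suc mult.commute)
  also have "(-1::'k) ^ e * ((-1) ^ q) ^ (e * N) = (-1) ^ (e * Suc N)"
    by (simp only: neg_one_odd_power[OF odd_q] power_add[symmetric] mult_Suc_right)
  finally show ?case .
qed simp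

lemma funpow_gamma_even: "(\<gamma> ^^ (2 * r)) x = x ^ (q ^ (2 * r))"
proof -
  have "(-1::'k) ^ (e * (2 * r)) = 1"
    by (simp add: neg_one_even_power)
  then show ?thesis
    by (simp only: funpow_gamma mult_1)
qed

lemma gamma_periodic: "\<exists>R>0. (\<gamma> ^^ R) x = x"
proof -
  obtain r where "r > 0" and r: "x ^ (q ^ r) = x"
    using pow_periodic by blast
  have "x ^ (q ^ (2 * r)) = (x ^ (q ^ r)) ^ (q ^ r)"
    by (metis mult_2 power_add power_mult)
  then show ?thesis
    using \<open>r > 0\<close> r by (intro exI[of _ "2 * r"]) (simp add: funpow_gamma_even)
qed

lemma period_pos: "period x > 0" and funpow_period: "(\<gamma> ^^ period x) x = x"
proof -
  obtain R where "R > 0" and "(\<gamma> ^^ R) x = x"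
    using gamma_periodic by blast
  then show "period x > 0" and "(\<gamma> ^^ period x) x = x"
    by (simp_all add: least_powerI)
qed

lemma funpow_gamma_fixed_iff: "(\<gamma> ^^ N) x = x \<longleftrightarrow> period x dvd N"
proof
  show "(\<gamma> ^^ N) x = x \<Longrightarrow> period x dvd N"
    by (rule least_power_minimal)
  show "period x dvd N \<Longrightarrow> (\<gamma> ^^ N) x = x"
    using funpow_mult_fixed[OF funpow_period] by (elim dvdE) simp
qed

lemma inj_gamma: "inj \<gamma>"
proof (rule injI)
  fix x y assume "\<gamma> x = \<gamma> y"
  define R where "R = period x * period y"
  have "R > 0"
    using period_pos by (simp add: R_def)
  then obtain R' where R': "R = Suc R'"
    using gr0_implies_Suc by blast
  have "(\<gamma> ^^ R) x = x" and "(\<gamma> ^^ R) y = y"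
    by (simp_all add: R_def funpow_gamma_fixed_iff)
  then have "x = (\<gamma> ^^ R') (\<gamma> x)" and "y = (\<gamma> ^^ R') (\<gamma> y)"
    by (simp_all only: R' funpow_Suc_right o_apply)
  then show "x = y"
    using \<open>\<gamma> x = \<gamma> y\<close> by simp
qed

lemma funpow_gamma_eq_iff: "(\<gamma> ^^ a) x = (\<gamma> ^^ b) x \<longleftrightarrow> a mod period x = b mod period x"
proof -
  have *: "(\<gamma> ^^ a) x = (\<gamma> ^^ b) x \<longleftrightarrow> a mod period x = b mod period x" if "a \<le> b" for a b
  proof -
    have "\<gamma> ^^ b = \<gamma> ^^ a \<circ> \<gamma> ^^ (b - a)"
      using that by (simp flip: funpow_add)
    then have "(\<gamma> ^^ a) x = (\<gamma> ^^ b) x \<longleftrightarrow> (\<gamma> ^^ (b - a)) x = x"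
      using inj_eq[OF inj_fn[OF inj_gamma], of a x "(\<gamma> ^^ (b - a)) x"] by auto
    also have "\<dots> \<longleftrightarrow> b mod period x = a mod period x"
      using that by (simp add: funpow_gamma_fixed_iff mod_eq_dvd_iff_nat)
    finally show ?thesis
      by auto
  qed
  show ?thesis
    using *[of a b] *[of b a] by (cases "a \<le> b") auto
qed

lemma gamma_inverse: "\<gamma> (inverse x) = inverse (\<gamma> x)"
proof -
  have "inverse ((-1::'k) ^ e) = (-1) ^ e"
    by (simp flip: power_inverse)
  then show ?thesis
    by (simp add: gamma_e_def inverse_mult_distrib power_inverse)
qed

lemma funpow_gamma_inverse: "(\<gamma> ^^ N) (inverse x) = inverse ((\<gamma> ^^ N) x)"
  by (induction N) (simp_all add: gamma_inverse)

lemma gamma_image_trivial: "\<gamma> ` {0, 1, -1} = {0, 1, -1}"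
proof -
  have "\<gamma> 0 = 0" and "\<gamma> 1 = (-1) ^ e" and "\<gamma> (-1) = - ((-1) ^ e)"
    using odd_q by (simp_all add: gamma_e_def zero_power odd_pos)
  moreover have "(-1::'k) ^ e = 1 \<or> (-1::'k) ^ e = -1"
    using e_less_2 by (auto simp: less_2_cases_iff)
  ultimately show ?thesis
    by auto
qed

lemma gamma_in_ktri_iff: "\<gamma> x \<in> ktri \<longleftrightarrow> x \<in> ktri"
proof -
  have "\<gamma> x \<in> {0, 1, -1} \<longleftrightarrow> x \<in> {0, 1, -1}"
    using inj_image_mem_iff[OF inj_gamma, of x "{0, 1, -1}"] by (simp only: gamma_image_trivial)
  then show ?thesis
    unfolding ktri_def by blast
qed

lemma funpow_gamma_in_ktri_iff: "(\<gamma> ^^ N) x \<in> ktri \<longleftrightarrow> x \<in> ktri"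
  by (induction N) (simp_all add: gamma_in_ktri_iff)

lemma funpow_gamma_invertible: "\<exists>m. (\<gamma> ^^ m) ((\<gamma> ^^ n) y) = y"
proof
  have "n \<le> period y * n"
    using period_pos[of y] by simp
  then have "(\<gamma> ^^ (period y * n - n)) ((\<gamma> ^^ n) y) = (\<gamma> ^^ (period y * n)) y"
    by (simp flip: funpow_add[THEN fun_cong, unfolded o_apply])
  then show "(\<gamma> ^^ (period y * n - n)) ((\<gamma> ^^ n) y) = y"
    by (simp add: funpow_gamma_fixed_iff)
qed

lemma funpow_gamma_in_orb_g: "(\<gamma> ^^ n) x \<in> orb_g q e x"
  by (auto simp: orb_g_def)

lemma orb_g_eq_image: "orb_g q e x = (\<lambda>i. (\<gamma> ^^ i) x) ` {..<period x}"
proof (intro set_eqI iffI)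
  fix y assume "y \<in> orb_g q e x"
  then obtain b where "y = (\<gamma> ^^ b) x"
    by (auto simp: orb_g_def)
  then have "y = (\<gamma> ^^ (b mod period x)) x"
    by (simp add: funpow_gamma_eq_iff)
  moreover have "b mod period x < period x"
    using period_pos by simp
  ultimately show "y \<in> (\<lambda>i. (\<gamma> ^^ i) x) ` {..<period x}"
    by blast
qed (auto simp: orb_g_def)

lemma card_orb_g: "card (orb_g q e x) = period x"
proof -
  have "inj_on (\<lambda>i. (\<gamma> ^^ i) x) {..<period x}"
    by (rule inj_onI) (simp add: funpow_gamma_eq_iff)
  then show ?thesis
    by (simp add: orb_g_eq_image card_image)
qed

lemma finite_orb_g: "finite (orb_g q e (x::'k))"
  by (simp add: orb_g_eq_image)

lemma funpow_gamma_in_orb_g_iff: "(\<gamma> ^^ n) y \<in> orb_g q e x \<longleftrightarrow> y \<in> orb_g q e x"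
proof -
  have closed: "(\<gamma> ^^ n) y \<in> orb_g q e x" if y: "y \<in> orb_g q e x" for n y
  proof -
    obtain b where "y = (\<gamma> ^^ b) x"
      using y unfolding orb_g_def by blast
    then have "(\<gamma> ^^ n) y = (\<gamma> ^^ (n + b)) x"
      by (simp add: funpow_add)
    then show ?thesis
      by (simp add: funpow_gamma_in_orb_g)
  qed
  obtain m where "(\<gamma> ^^ m) ((\<gamma> ^^ n) y) = y"
    using funpow_gamma_invertible by blast
  then show ?thesis
    using closed[of "(\<gamma> ^^ n) y" m] closed[of y n] by auto
qed

lemma orb_g_sym:
  assumes "y \<in> orb_g q e x"
  shows "(x::'k) \<in> orb_g q e y"
proof -
  obtain b where "y = (\<gamma> ^^ b) x"
    using assms unfolding orb_g_def by blast
  moreover obtain m where "(\<gamma> ^^ m) ((\<gamma> ^^ b) x) = x"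
    using funpow_gamma_invertible by blast
  ultimately show ?thesis
    using funpow_gamma_in_orb_g[of m y] by simp
qed

lemma orb_g_trans: "y \<in> orb_g q e x \<Longrightarrow> z \<in> orb_g q e y \<Longrightarrow> (z::'k) \<in> orb_g q e x"
  by (auto simp: orb_g_def[of q e y] funpow_gamma_in_orb_g_iff)

abbreviation Orb :: "'k \<Rightarrow> 'k set" where "Orb x \<equiv> orb_ag q e x"

lemma mem_inverse_image_iff: "z \<in> inverse ` S \<longleftrightarrow> inverse z \<in> (S :: 'k set)"
  by (metis image_eqI image_iff inverse_inverse_eq)

lemma Orb_eq: "Orb x = orb_g q e x \<union> inverse ` orb_g q e x"
  unfolding orb_ag_def orb_g_def alpha_def by auto

lemma finite_Orb: "finite (Orb x)"
  by (simp add: Orb_eq finite_orb_g)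

lemma self_in_Orb: "x \<in> Orb x"
  using funpow_gamma_in_orb_g[of 0 x] by (simp add: Orb_eq)

lemma Orb_cases:
  assumes "y \<in> Orb x"
  obtains b where "y = (\<gamma> ^^ b) x" | b where "y = inverse ((\<gamma> ^^ b) x)"
  using assms unfolding orb_ag_def alpha_def by auto

lemma funpow_gamma_in_Orb_iff: "(\<gamma> ^^ n) y \<in> Orb x \<longleftrightarrow> y \<in> Orb x"
  by (simp add: Orb_eq mem_inverse_image_iff funpow_gamma_in_orb_g_iff
      flip: funpow_gamma_inverse)

lemma gamma_in_Orb_iff: "\<gamma> y \<in> Orb x \<longleftrightarrow> y \<in> Orb x"
  using funpow_gamma_in_Orb_iff[of 1] by simp

lemma inverse_in_Orb_iff: "inverse y \<in> Orb x \<longleftrightarrow> y \<in> Orb x"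
  by (auto simp: Orb_eq mem_inverse_image_iff)

lemma Orb_subset: "y \<in> Orb x \<Longrightarrow> Orb y \<subseteq> Orb x"
  by (auto elim: Orb_cases simp: funpow_gamma_in_Orb_iff inverse_in_Orb_iff)

lemma Orb_eq_Orb:
  assumes "y \<in> Orb x"
  shows "Orb y = Orb x"
proof
  show "Orb y \<subseteq> Orb x"
    using assms by (rule Orb_subset)
  have "y \<in> Orb y"
    by (rule self_in_Orb)
  with assms have "x \<in> Orb y"
    by (cases rule: Orb_cases) (simp_all add: funpow_gamma_in_Orb_iff inverse_in_Orb_iff)
  then show "Orb x \<subseteq> Orb y"
    by (rule Orb_subset)
qed

lemma Orb_subset_ktri: "x \<in> ktri \<Longrightarrow> Orb x \<subseteq> ktri"
  by (auto elim: Orb_cases simp: funpow_gamma_in_ktri_iff inverse_in_ktri)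

lemma orbit_invariant_eq:
  assumes "\<And>x. f (inverse x) = f x" and "\<And>x. x \<in> ktri \<Longrightarrow> f (\<gamma> x) = f x"
    and "l \<in> ktri" and "x \<in> Orb l"
  shows "f x = f l"
proof -
  have *: "f ((\<gamma> ^^ b) l) = f l" for b
    by (induction b) (simp_all add: assms(2) funpow_gamma_in_ktri_iff \<open>l \<in> ktri\<close>)
  from assms(4) show ?thesis
    by (cases rule: Orb_cases) (simp_all add: assms(1) *)
qed

definition self_reciprocal :: "'k \<Rightarrow> bool" where
  "self_reciprocal x \<longleftrightarrow> inverse x \<in> orb_g q e x"

lemma Orb_self_reciprocal:
  assumes "self_reciprocal x"
  shows "Orb x = orb_g q e x"
proof -
  have "inverse ((\<gamma> ^^ b) x) \<in> orb_g q e x" for b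
    using assms by (simp add: self_reciprocal_def funpow_gamma_in_orb_g_iff
        flip: funpow_gamma_inverse)
  then show ?thesis
    by (auto simp: Orb_eq orb_g_def[of q e x])
qed

lemma card_Orb_self_reciprocal: "self_reciprocal x \<Longrightarrow> card (Orb x) = period x"
  by (simp add: Orb_self_reciprocal card_orb_g)

lemma card_Orb_not_self_reciprocal:
  assumes "\<not> self_reciprocal x"
  shows "card (Orb x) = 2 * period x"
proof -
  have "orb_g q e x \<inter> inverse ` orb_g q e x = {}"
  proof (rule ccontr)
    assume "orb_g q e x \<inter> inverse ` orb_g q e x \<noteq> {}"
    then obtain b where "inverse ((\<gamma> ^^ b) x) \<in> orb_g q e x"
      by (auto simp: orb_g_def[of q e x])
    then have "inverse x \<in> orb_g q e x"
      by (simp add: funpow_gamma_in_orb_g_iff flip: funpow_gamma_inverse)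
    with assms show False
      by (simp add: self_reciprocal_def)
  qed
  moreover have "card (inverse ` orb_g q e x) = period x"
    by (simp add: card_image inj_on_def card_orb_g)
  ultimately show ?thesis
    by (simp add: Orb_eq card_Un_disjoint finite_orb_g card_orb_g)
qed

lemma card_Orb_le: "period x \<le> card (Orb x)" and card_Orb_le_2_period: "card (Orb x) \<le> 2 * period x"
  using card_Orb_self_reciprocal card_Orb_not_self_reciprocal by (cases "self_reciprocal x"; simp)+

lemma self_reciprocal_half_period:
  assumes "x \<in> ktri" and "self_reciprocal x"
  obtains h where "h > 0" and "period x = 2 * h" and "(\<gamma> ^^ h) x = inverse x"
proof -
  obtain s where s: "(\<gamma> ^^ s) x = inverse x"
    using assms(2) by (auto simp: self_reciprocal_def orb_g_def)
  have "(\<gamma> ^^ (s + s)) x = x"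
    by (simp add: funpow_add s funpow_gamma_inverse)
  then obtain t where t: "s + s = period x * t"
    by (auto simp: funpow_gamma_fixed_iff)
  have "\<not> period x dvd s"
    using s inverse_neq_self_ktri[OF assms(1)] by (auto simp: funpow_gamma_fixed_iff[symmetric])
  have "odd t"
  proof
    assume "even t"
    then obtain b where "t = 2 * b" ..
    then have "s = period x * b"
      using t by simp
    with \<open>\<not> period x dvd s\<close> show False
      by simp
  qed
  moreover have "even (period x * t)"
    by (simp flip: t)
  ultimately obtain h where h: "period x = 2 * h"
    by (auto elim!: evenE)
  then have "h > 0"
    using period_pos[of x] by simp
  have "s = h * t"
    using t h by simp
  then have "s mod period x = h mod period x"
    using \<open>odd t\<close> \<open>h > 0\<close> h by (simp add: mult_mod_right[symmetric] odd_iff_mod_2_eq_one)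
  then have "(\<gamma> ^^ h) x = (\<gamma> ^^ s) x"
    by (simp add: funpow_gamma_eq_iff)
  then have "(\<gamma> ^^ h) x = inverse x"
    using s by simp
  with that \<open>h > 0\<close> h show ?thesis
    by blast
qed

lemma Orb_in_Omega'_iff:
  assumes "x \<in> ktri"
  shows "Orb x \<in> Omega' q e \<longleftrightarrow> self_reciprocal x"
proof
  assume "Orb x \<in> Omega' q e"
  then obtain \<mu> where "Orb x = orb_g q e \<mu>"
    by (auto simp: Omega'_def)
  then have "x \<in> orb_g q e \<mu>" and "inverse x \<in> orb_g q e \<mu>"
    using self_in_Orb[of x] inverse_in_Orb_iff[of x x] by auto
  then show "self_reciprocal x"
    unfolding self_reciprocal_def by (blast intro: orb_g_trans orb_g_sym)
next
  assume "self_reciprocal x"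
  moreover have "Orb x \<in> Omega q e"
    using assms by (auto simp: Omega_def)
  ultimately show "Orb x \<in> Omega' q e"
    using self_in_Orb[of x] by (auto simp: Omega'_def Orb_self_reciprocal)
qed

section \<open>Invariant multisets of roots\<close>

definition root_msets :: "nat \<Rightarrow> 'k multiset set" where
  "root_msets n = {A. size A = n \<and> set_mset A \<subseteq> ktri \<and> (\<forall>x. count A (inverse x) = count A x)
     \<and> (\<forall>x\<in>ktri. count A (\<gamma> x) = count A x)}"

lemma poly_of_roots_in_gA0:
  assumes A: "A \<in> root_msets n"
  shows "poly_of_roots A \<in> gA0 q e n"
proof -
  have "0 \<notin># A" and "1 \<notin># A" and "-1 \<notin># A"
    using A by (auto simp: root_msets_def ktri_def)
  moreover have "lead_coeff (poly_of_roots A) = 1"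
    by (simp del: degree_poly_of_roots)
  moreover have "degree (poly_of_roots A) = n"
    using A by (simp add: root_msets_def)
  ultimately show ?thesis
    using A by (auto simp: gA0_def A0_def nmult_def root_msets_def poly_of_roots_eq_0_iff not_in_iff)
qed

lemma gA0_eq_image_root_msets: "gA0 q e n = poly_of_roots ` root_msets n"
proof
  show "poly_of_roots ` root_msets n \<subseteq> gA0 q e n"
    using poly_of_roots_in_gA0 by blast
next
  show "gA0 q e n \<subseteq> poly_of_roots ` root_msets n"
  proof
    fix D :: "'k poly" assume "D \<in> gA0 q e n"
    then have lc: "lead_coeff D = 1" and deg: "degree D = n" and "poly D 0 \<noteq> 0"
      and inv: "\<And>l. l \<noteq> 0 \<Longrightarrow> order (inverse l) D = order l D"
      and "order 1 D = 0" and "order (-1) D = 0"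
      and gam: "\<And>l. l \<in> ktri \<Longrightarrow> order (\<gamma> l) D = order l D"
      unfolding gA0_def A0_def nmult_def by auto
    obtain A where A: "D = poly_of_roots A"
      using monic_eq_poly_of_roots[OF alg_closed lc] by blast
    have "order 0 D = 0"
      using \<open>poly D 0 \<noteq> 0\<close> by (rule order_0I)
    then have "set_mset A \<subseteq> ktri"
      using \<open>order 1 D = 0\<close> \<open>order (-1) D = 0\<close> by (auto simp: A ktri_def count_eq_zero_iff)
    moreover have "count A (inverse x) = count A x" for x
      using inv[of x] by (cases "x = 0") (simp_all add: A)
    ultimately have "A \<in> root_msets n"
      using deg gam by (simp add: A root_msets_def)
    then show "D \<in> poly_of_roots ` root_msets n"
      by (simp add: A)
  qed
qed

lemma count_eq_on_Orb:
  assumes "A \<in> root_msets n" and "l \<in> ktri" and "x \<in> Orb l"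
  shows "count A x = count A l"
  by (rule orbit_invariant_eq[of "count A"]) (use assms in \<open>auto simp: root_msets_def\<close>)

lemma card_Orb_mult_count_le:
  assumes A: "A \<in> root_msets n" and l: "l \<in> ktri"
  shows "card (Orb l) * count A l \<le> n"
proof -
  have "card (Orb l) * count A l = (\<Sum>x\<in>Orb l. count A l)"
    by simp
  also have "\<dots> = (\<Sum>x\<in>Orb l. count A x)"
    by (rule sum.cong) (simp_all add: count_eq_on_Orb[OF A l])
  also have "\<dots> \<le> (\<Sum>x\<in>Orb l \<union> set_mset A. count A x)"
    by (rule sum_mono2) (auto simp: finite_Orb)
  also have "\<dots> = n"
    using A size_eq_sum_count[of "Orb l \<union> set_mset A" A] by (simp add: finite_Orb root_msets_def)
  finally show ?thesis .
qed

definition short_orbit_points :: "nat \<Rightarrow> 'k set" where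
  "short_orbit_points k = {l \<in> ktri. card (Orb l) \<le> k}"

lemma q_ge_2: "q \<ge> 2"
proof -
  have "q \<noteq> 1"
    using of_nat_q by auto
  with odd_q show ?thesis
    by presburger
qed

lemma finite_short_orbit_points: "finite (short_orbit_points k)"
proof -
  have "short_orbit_points k \<subseteq> (\<Union>r\<in>{1..k}. {x. x ^ (q ^ (2 * r)) = x})"
  proof
    fix l assume l: "l \<in> short_orbit_points k"
    have "1 \<le> period l" and "period l \<le> k"
      using l period_pos[of l] card_Orb_le[of l] by (auto simp: short_orbit_points_def)
    moreover have "(\<gamma> ^^ (2 * period l)) l = l"
      by (simp add: funpow_gamma_fixed_iff)
    then have "l ^ (q ^ (2 * period l)) = l"
      by (simp only: funpow_gamma_even)
    ultimately show "l \<in> (\<Union>r\<in>{1..k}. {x. x ^ (q ^ (2 * r)) = x})"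
      by auto
  qed
  moreover have "finite {x::'k. x ^ (q ^ (2 * r)) = x}" if "r \<ge> 1" for r
  proof (rule finite_pow_eq_self)
    have "q \<le> q ^ (2 * r)"
      using q_ge_2 that by (simp add: self_le_power)
    then show "2 \<le> q ^ (2 * r)"
      using q_ge_2 by simp
  qed
  then have "finite (\<Union>r\<in>{1..k}. {x::'k. x ^ (q ^ (2 * r)) = x})"
    by (intro finite_UN_I) auto
  ultimately show ?thesis
    by (rule finite_subset)
qed

lemma set_mset_subset_short_orbit_points:
  assumes A: "A \<in> root_msets n"
  shows "set_mset A \<subseteq> short_orbit_points n"
proof
  fix x assume "x \<in># A"
  then have "x \<in> ktri" and "count A x \<ge> 1"
    using A by (auto simp: root_msets_def Suc_le_eq)
  then have "card (Orb x) \<le> card (Orb x) * count A x"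
    by simp
  also have "\<dots> \<le> n"
    using card_Orb_mult_count_le[OF A \<open>x \<in> ktri\<close>] .
  finally show "x \<in> short_orbit_points n"
    using \<open>x \<in> ktri\<close> by (simp add: short_orbit_points_def)
qed

lemma finite_root_msets: "finite (root_msets n)"
proof -
  have "root_msets n \<subseteq> multisets_of_size (short_orbit_points n) n"
    using set_mset_subset_short_orbit_points by (auto simp: multisets_of_size_def root_msets_def)
  then show ?thesis
    using finite_multisets_of_size[OF finite_short_orbit_points] finite_subset by blast
qed

definition orbit_rep :: "'k set \<Rightarrow> 'k" where
  "orbit_rep Ob = (SOME l. l \<in> Ob)"

definition j_mset :: "'k multiset \<Rightarrow> nat" where
  "j_mset A = (\<Sum>Ob\<in>{Ob \<in> Omega' q e. count A (orbit_rep Ob) \<noteq> 0}. count A (orbit_rep Ob))"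

lemma jD_poly_of_roots: "jD q e (poly_of_roots A) = j_mset A"
  unfolding jD_def j_mset_def nO_def nmult_def orbit_rep_def by simp

definition signed_count :: "nat \<Rightarrow> int" where
  "signed_count n = (\<Sum>A\<in>root_msets n. (-1) ^ j_mset A)"

lemma sum_gA0_eq_signed_count: "(\<Sum>D\<in>(gA0 q e n :: 'k poly set). (-1::int) ^ jD q e D) = signed_count n"
proof -
  have "inj_on poly_of_roots (root_msets n)"
    using inj_poly_of_roots by (rule inj_on_subset) simp
  then show ?thesis
    by (simp add: gA0_eq_image_root_msets signed_count_def sum.reindex jD_poly_of_roots)
qed

lemma orbit_rep_in_Orb_iff:
  assumes "Ob \<in> Omega q e"
  shows "orbit_rep Ob \<in> Orb l \<longleftrightarrow> Ob = Orb l"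
proof -
  obtain \<mu> where \<mu>: "Ob = Orb \<mu>"
    using assms by (auto simp: Omega_def)
  then have rep: "orbit_rep Ob \<in> Ob"
    unfolding orbit_rep_def using self_in_Orb by (metis someI)
  then have "Orb (orbit_rep Ob) = Ob"
    using \<mu> Orb_eq_Orb by blast
  then show ?thesis
    using rep Orb_eq_Orb[of "orbit_rep Ob" l] by auto
qed

lemma finite_j_support: "finite {Ob \<in> Omega' q e. count A (orbit_rep Ob) \<noteq> 0}"
proof (rule finite_subset)
  show "{Ob \<in> Omega' q e. count A (orbit_rep Ob) \<noteq> 0} \<subseteq> Orb ` set_mset A"
  proof
    fix Ob assume Ob: "Ob \<in> {Ob \<in> Omega' q e. count A (orbit_rep Ob) \<noteq> 0}"
    then have "Ob = Orb (orbit_rep Ob)"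
      using orbit_rep_in_Orb_iff self_in_Orb by (auto simp: Omega'_def)
    moreover have "orbit_rep Ob \<in># A"
      using Ob by (simp add: count_eq_zero_iff)
    ultimately show "Ob \<in> Orb ` set_mset A"
      by blast
  qed
qed simp

lemma j_mset_eq_sum:
  assumes "finite T" and "T \<subseteq> Omega' q e"
    and "{Ob \<in> Omega' q e. count A (orbit_rep Ob) \<noteq> 0} \<subseteq> T"
  shows "j_mset A = (\<Sum>Ob\<in>T. count A (orbit_rep Ob))"
  unfolding j_mset_def using assms by (intro sum.mono_neutral_left) auto

definition add_orbit :: "nat \<Rightarrow> 'k \<Rightarrow> 'k multiset \<Rightarrow> 'k multiset" where
  "add_orbit j l A = A + repeat_mset j (mset_set (Orb l))"

lemma count_add_orbit: "count (add_orbit j l A) x = count A x + (if x \<in> Orb l then j else 0)"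
  by (simp add: add_orbit_def finite_Orb)

lemma size_add_orbit: "size (add_orbit j l A) = size A + j * card (Orb l)"
  by (simp add: add_orbit_def)

lemma add_orbit_in_root_msets:
  assumes A: "A \<in> root_msets m" and l: "l \<in> ktri"
  shows "add_orbit j l A \<in> root_msets (m + j * card (Orb l))"
proof -
  have "set_mset (add_orbit j l A) \<subseteq> set_mset A \<union> Orb l"
  proof
    fix x assume "x \<in># add_orbit j l A"
    then have "count (add_orbit j l A) x > 0"
      by simp
    then show "x \<in> set_mset A \<union> Orb l"
      by (auto simp: count_add_orbit split: if_splits)
  qed
  also have "\<dots> \<subseteq> ktri"
    using A Orb_subset_ktri[OF l] by (auto simp: root_msets_def)
  finally show ?thesis
    using A by (auto simp: root_msets_def size_add_orbit count_add_orbit inverse_in_Orb_iff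
        gamma_in_Orb_iff)
qed

lemma j_mset_add_orbit:
  assumes l: "l \<in> ktri"
  shows "j_mset (add_orbit j l A) = j_mset A + (if Orb l \<in> Omega' q e then j else 0)"
proof -
  define T where "T = {Ob \<in> Omega' q e. count A (orbit_rep Ob) \<noteq> 0} \<union> ({Orb l} \<inter> Omega' q e)"
  have T: "finite T" "T \<subseteq> Omega' q e"
    using finite_j_support by (auto simp: T_def)
  have count_rep: "count (add_orbit j l A) (orbit_rep Ob) = count A (orbit_rep Ob) + (if Ob = Orb l then j else 0)"
    if "Ob \<in> Omega' q e" for Ob
    using that orbit_rep_in_Orb_iff by (simp add: Omega'_def count_add_orbit)
  have "{Ob \<in> Omega' q e. count (add_orbit j l A) (orbit_rep Ob) \<noteq> 0} \<subseteq> T"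
  proof
    fix Ob assume Ob: "Ob \<in> {Ob \<in> Omega' q e. count (add_orbit j l A) (orbit_rep Ob) \<noteq> 0}"
    then show "Ob \<in> T"
      using count_rep[of Ob] by (cases "Ob = Orb l") (simp_all add: T_def flip: count_greater_zero_iff)
  qed
  then have "j_mset (add_orbit j l A) = (\<Sum>Ob\<in>T. count (add_orbit j l A) (orbit_rep Ob))"
    by (rule j_mset_eq_sum[OF T])
  also have "\<dots> = (\<Sum>Ob\<in>T. count A (orbit_rep Ob)) + (\<Sum>Ob\<in>T. if Ob = Orb l then j else 0)"
    using T(2) count_rep by (simp add: subset_iff sum.distrib)
  also have "(\<Sum>Ob\<in>T. count A (orbit_rep Ob)) = j_mset A"
    using T by (intro j_mset_eq_sum[symmetric]) (auto simp: T_def)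
  also have "(\<Sum>Ob\<in>T. if Ob = Orb l then j else 0) = (if Orb l \<in> Omega' q e then j else 0)"
    using T(1) by (simp add: sum.delta) (auto simp: T_def)
  finally show ?thesis .
qed

definition orbit_sign :: "'k \<Rightarrow> int" where
  "orbit_sign l = (if Orb l \<in> Omega' q e then -1 else 1)"

lemma sign_add_orbit:
  "l \<in> ktri \<Longrightarrow> (-1::int) ^ j_mset (add_orbit j l A) = (-1) ^ j_mset A * orbit_sign l ^ j"
  by (simp add: j_mset_add_orbit orbit_sign_def power_add)

lemma root_msets_eq_add_orbit:
  assumes B: "B \<in> root_msets n" and l: "l \<in> ktri" and j: "j \<le> count B l"
  obtains A where "A \<in> root_msets (n - j * card (Orb l))" and "B = add_orbit j l A"
proof
  define A where "A = B - repeat_mset j (mset_set (Orb l))"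
  have count_A: "count A x = count B x - (if x \<in> Orb l then j else 0)" for x
    by (simp add: A_def finite_Orb)
  show B_eq: "B = add_orbit j l A"
    using count_eq_on_Orb[OF B l] j by (intro multiset_eqI) (simp add: count_add_orbit count_A)
  have "size A = n - j * card (Orb l)"
    using B size_add_orbit[of j l A] by (simp add: root_msets_def flip: B_eq)
  moreover have "set_mset A \<subseteq> ktri"
    using B in_diffD by (fastforce simp: root_msets_def A_def)
  ultimately show "A \<in> root_msets (n - j * card (Orb l))"
    using B by (auto simp: root_msets_def count_A inverse_in_Orb_iff gamma_in_Orb_iff)
qed

lemma image_add_orbit_root_msets:
  assumes l: "l \<in> ktri" and "j * card (Orb l) \<le> n"
  shows "add_orbit j l ` root_msets (n - j * card (Orb l)) = {A \<in> root_msets n. j \<le> count A l}"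
proof
  show "add_orbit j l ` root_msets (n - j * card (Orb l)) \<subseteq> {A \<in> root_msets n. j \<le> count A l}"
  proof (rule image_subsetI)
    fix A assume "A \<in> root_msets (n - j * card (Orb l))"
    then have "add_orbit j l A \<in> root_msets (n - j * card (Orb l) + j * card (Orb l))"
      by (rule add_orbit_in_root_msets[OF _ l])
    with assms(2) show "add_orbit j l A \<in> {A \<in> root_msets n. j \<le> count A l}"
      using self_in_Orb[of l] by (simp add: count_add_orbit)
  qed
  show "{A \<in> root_msets n. j \<le> count A l} \<subseteq> add_orbit j l ` root_msets (n - j * card (Orb l))"
  proof
    fix B assume "B \<in> {A \<in> root_msets n. j \<le> count A l}"
    then have "B \<in> root_msets n" and "j \<le> count B l"
      by auto
    then obtain A where "A \<in> root_msets (n - j * card (Orb l))" and "B = add_orbit j l A"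
      by (rule root_msets_eq_add_orbit[OF _ l])
    then show "B \<in> add_orbit j l ` root_msets (n - j * card (Orb l))"
      by simp
  qed
qed

lemma sum_sign_count_ge:
  assumes l: "l \<in> ktri"
  shows "(\<Sum>A\<in>{A \<in> root_msets n. j \<le> count A l}. (-1::int) ^ j_mset A)
         = (if j * card (Orb l) \<le> n then orbit_sign l ^ j * signed_count (n - j * card (Orb l)) else 0)"
proof (cases "j * card (Orb l) \<le> n")
  case True
  define m where "m = n - j * card (Orb l)"
  have "inj_on (add_orbit j l) (root_msets m)"
    by (auto simp: inj_on_def add_orbit_def)
  then have "(\<Sum>A\<in>{A \<in> root_msets n. j \<le> count A l}. (-1::int) ^ j_mset A)
      = (\<Sum>A\<in>root_msets m. (-1) ^ j_mset A * orbit_sign l ^ j)"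
    using image_add_orbit_root_msets[OF l True, folded m_def]
    by (metis (no_types, lifting) sum.reindex_cong sign_add_orbit[OF l])
  also have "\<dots> = orbit_sign l ^ j * signed_count m"
    by (simp add: signed_count_def sum_distrib_left mult.commute)
  finally show ?thesis
    using True by (simp add: m_def)
next
  case False
  have "{A \<in> root_msets n. j \<le> count A l} = {}"
  proof (rule ccontr)
    assume "{A \<in> root_msets n. j \<le> count A l} \<noteq> {}"
    then obtain A where "A \<in> root_msets n" and "j \<le> count A l"
      by blast
    then have "j * card (Orb l) \<le> n"
      using card_Orb_mult_count_le[OF _ l] by (metis le_trans mult.commute mult_le_mono2)
    with False show False ..
  qed
  with False show ?thesis
    by (simp only: sum.empty if_False)
qed

section \<open>Power sums and the Newton identity\<close>

definition power_sum_term :: "nat \<Rightarrow> 'k \<Rightarrow> int" where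
  "power_sum_term k l = (if card (Orb l) dvd k then orbit_sign l ^ (k div card (Orb l)) else 0)"

(* p_k = sum over the orbits O with |O| dividing k of |O| eps_O^(k/|O|), written pointwise. *)
definition power_sum :: "nat \<Rightarrow> int" where
  "power_sum k = (\<Sum>l\<in>short_orbit_points k. power_sum_term k l)"

lemma card_Orb_pos: "card (Orb l) > 0"
  using finite_Orb self_in_Orb by (metis card_gt_0_iff empty_iff)

lemma sum_power_sum_term_short_orbit_points:
  assumes "1 \<le> k" and "k \<le> n"
  shows "(\<Sum>l\<in>short_orbit_points n. power_sum_term k l) = power_sum k"
  unfolding power_sum_def
proof (rule sum.mono_neutral_right[OF finite_short_orbit_points])
  show "short_orbit_points k \<subseteq> short_orbit_points n"
    using assms by (auto simp: short_orbit_points_def)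
  show "\<forall>l\<in>short_orbit_points n - short_orbit_points k. power_sum_term k l = 0"
    using assms by (auto simp: short_orbit_points_def power_sum_term_def dest: dvd_imp_le)
qed

lemma int_size_eq_sum_indicator:
  assumes A: "A \<in> root_msets n"
  shows "int n = (\<Sum>l\<in>short_orbit_points n. \<Sum>j=1..n. if j \<le> count A l then 1 else 0)"
proof -
  have "n = size A"
    using A by (simp add: root_msets_def)
  also have "\<dots> = (\<Sum>l\<in>short_orbit_points n. count A l)"
    by (rule size_eq_sum_count[OF finite_short_orbit_points set_mset_subset_short_orbit_points[OF A]])
  finally have "int n = (\<Sum>l\<in>short_orbit_points n. int (count A l))"
    by (metis of_nat_sum)
  also have "\<dots> = (\<Sum>l\<in>short_orbit_points n. \<Sum>j=1..n. if j \<le> count A l then 1 else 0)"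
  proof (rule sum.cong[OF refl])
    fix l assume "l \<in> short_orbit_points n"
    then have "card (Orb l) * count A l \<le> n"
      using card_Orb_mult_count_le[OF A] by (simp add: short_orbit_points_def)
    moreover have "1 * count A l \<le> card (Orb l) * count A l"
      using card_Orb_pos[of l] by (intro mult_le_mono1) simp
    ultimately have "count A l \<le> n"
      by linarith
    then show "int (count A l) = (\<Sum>j=1..n. if j \<le> count A l then 1 else 0)"
      by (rule sum_indicator_le[symmetric])
  qed
  finally show ?thesis .
qed

lemma sum_sign_count_ge_eq_power_sum_terms:
  assumes "l \<in> ktri"
  shows "(\<Sum>j=1..n. \<Sum>A\<in>{A \<in> root_msets n. j \<le> count A l}. (-1::int) ^ j_mset A)
    = (\<Sum>k=1..n. signed_count (n - k) * power_sum_term k l)"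
proof -
  define c where "c = card (Orb l)"
  have "c > 0"
    using card_Orb_pos by (simp add: c_def)
  then have mult_div: "j * c div c = j" for j
    by simp
  have "(\<Sum>j=1..n. \<Sum>A\<in>{A \<in> root_msets n. j \<le> count A l}. (-1::int) ^ j_mset A)
    = (\<Sum>j=1..n. if j * c \<le> n then orbit_sign l ^ (j * c div c) * signed_count (n - j * c) else 0)"
    unfolding mult_div by (simp add: sum_sign_count_ge[OF assms, folded c_def])
  also have "\<dots> = (\<Sum>k=1..n. if c dvd k then orbit_sign l ^ (k div c) * signed_count (n - k) else 0)"
    by (rule sum_multiples[OF \<open>c > 0\<close>])
  also have "\<dots> = (\<Sum>k=1..n. signed_count (n - k) * power_sum_term k l)"
    unfolding power_sum_term_def c_def by (intro sum.cong) auto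
  finally show ?thesis .
qed

(* Count the pairs (l, j) with 1 <= j <= count A l: those with fixed l and j come from the
   multisets of size n - j |Orb l|, to which j copies of Orb l are added. *)
lemma newton_identity: "int n * signed_count n = (\<Sum>k=1..n. signed_count (n - k) * power_sum k)"
proof -
  have "int n * signed_count n
      = (\<Sum>A\<in>root_msets n. \<Sum>l\<in>short_orbit_points n. \<Sum>j=1..n. if j \<le> count A l then (-1) ^ j_mset A else 0)"
    unfolding signed_count_def sum_distrib_left
  proof (rule sum.cong[OF refl])
    have indicator_mult: "(if P then 1 else 0) * x = (if P then x else 0)" for P and x :: int
      by simp
    show "int n * (-1) ^ j_mset A
      = (\<Sum>l\<in>short_orbit_points n. \<Sum>j=1..n. if j \<le> count A l then (-1) ^ j_mset A else 0)"
      if "A \<in> root_msets n" for A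
      by (simp add: int_size_eq_sum_indicator[OF that] sum_distrib_right indicator_mult)
  qed
  also have "\<dots> = (\<Sum>l\<in>short_orbit_points n. \<Sum>j=1..n. \<Sum>A\<in>root_msets n.
      if j \<le> count A l then (-1) ^ j_mset A else 0)"
    by (subst sum.swap) (simp add: sum.swap[of _ "root_msets n"])
  also have "\<dots> = (\<Sum>l\<in>short_orbit_points n. \<Sum>j=1..n. \<Sum>A\<in>{A \<in> root_msets n. j \<le> count A l}. (-1) ^ j_mset A)"
    by (simp add: sum.inter_filter finite_root_msets)
  also have "\<dots> = (\<Sum>l\<in>short_orbit_points n. \<Sum>k=1..n. signed_count (n - k) * power_sum_term k l)"
    by (rule sum.cong[OF refl], rule sum_sign_count_ge_eq_power_sum_terms) (simp add: short_orbit_points_def)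
  also have "\<dots> = (\<Sum>k=1..n. signed_count (n - k) * power_sum k)"
    by (subst sum.swap) (simp add: sum_power_sum_term_short_orbit_points flip: sum_distrib_left)
  finally show ?thesis .
qed

section \<open>Evaluation of the power sums\<close>

lemma power_sum_term_even_self_reciprocal:
  assumes "l \<in> ktri" and "self_reciprocal l"
  shows "power_sum_term (2 * N) l = of_bool ((\<gamma> ^^ N) l = l) - of_bool ((\<gamma> ^^ N) l = inverse l)"
proof -
  obtain h where "h > 0" and per: "period l = 2 * h" and h: "(\<gamma> ^^ h) l = inverse l"
    using self_reciprocal_half_period[OF assms] by blast
  have card: "card (Orb l) = 2 * h" and sign: "orbit_sign l = -1"
    using assms per by (simp_all add: card_Orb_self_reciprocal orbit_sign_def Orb_in_Omega'_iff)
  have fixed: "(\<gamma> ^^ N) l = l \<longleftrightarrow> N mod (2 * h) = 0"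
    by (simp add: funpow_gamma_fixed_iff per dvd_eq_mod_eq_0)
  have inv: "(\<gamma> ^^ N) l = inverse l \<longleftrightarrow> N mod (2 * h) = h"
    using \<open>h > 0\<close> by (simp add: funpow_gamma_eq_iff per flip: h)
  have "power_sum_term (2 * N) l = (if 2 * h dvd 2 * N then (-1) ^ (2 * N div (2 * h)) else 0)"
    by (simp only: power_sum_term_def card sign)
  also have "\<dots> = of_bool (N mod (2 * h) = 0) - of_bool (N mod (2 * h) = h)"
    by (rule signed_multiple_indicator[OF \<open>h > 0\<close>])
  also have "\<dots> = of_bool ((\<gamma> ^^ N) l = l) - of_bool ((\<gamma> ^^ N) l = inverse l)"
    by (simp only: fixed inv)
  finally show ?thesis .
qed

lemma power_sum_term_even_not_self_reciprocal:
  assumes "l \<in> ktri" and "\<not> self_reciprocal l"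
  shows "power_sum_term (2 * N) l = of_bool ((\<gamma> ^^ N) l = l) - of_bool ((\<gamma> ^^ N) l = inverse l)"
proof -
  have "card (Orb l) = 2 * period l" and "orbit_sign l = 1"
    using assms by (simp_all add: card_Orb_not_self_reciprocal orbit_sign_def Orb_in_Omega'_iff)
  moreover have "(\<gamma> ^^ N) l \<noteq> inverse l"
    using assms(2) funpow_gamma_in_orb_g[of N l] by (auto simp: self_reciprocal_def)
  ultimately show ?thesis
    by (simp add: power_sum_term_def funpow_gamma_fixed_iff)
qed

lemma power_sum_term_even:
  "l \<in> ktri \<Longrightarrow>
    power_sum_term (2 * N) l = of_bool ((\<gamma> ^^ N) l = l) - of_bool ((\<gamma> ^^ N) l = inverse l)"
  using power_sum_term_even_self_reciprocal power_sum_term_even_not_self_reciprocal by blast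

lemma even_card_Orb:
  assumes "l \<in> ktri"
  shows "even (card (Orb l))"
proof (cases "self_reciprocal l")
  case True
  then obtain h where "period l = 2 * h"
    using self_reciprocal_half_period[OF assms] by blast
  with True show ?thesis
    by (simp add: card_Orb_self_reciprocal)
qed (simp add: card_Orb_not_self_reciprocal)

lemma power_sum_term_odd:
  assumes "l \<in> ktri" and "odd k"
  shows "power_sum_term k l = 0"
proof -
  have "\<not> card (Orb l) dvd k"
    using even_card_Orb[OF assms(1)] assms(2) by (blast intro: dvd_trans)
  then show ?thesis
    by (simp add: power_sum_term_def)
qed

lemma power_sum_odd: "odd k \<Longrightarrow> power_sum k = 0"
  unfolding power_sum_def by (rule sum.neutral) (simp add: short_orbit_points_def power_sum_term_odd)

lemma funpow_gamma_eq_self_iff: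
  assumes "x \<noteq> 0"
  shows "(\<gamma> ^^ N) x = x \<longleftrightarrow> x ^ (q ^ N - 1) = (-1) ^ (e * N)"
proof -
  define c :: 'k where "c = (-1) ^ (e * N)"
  have "c * c = 1"
    by (simp add: c_def flip: power_add)
  have "q ^ N > 0"
    using odd_pos[OF odd_q] by simp
  then have "x ^ q ^ N = x ^ (q ^ N - 1) * x"
    by (rule power_minus_mult[symmetric])
  then have "(\<gamma> ^^ N) x = x \<longleftrightarrow> c * x ^ (q ^ N - 1) = 1"
    using assms by (simp add: funpow_gamma c_def mult.assoc)
  also have "\<dots> \<longleftrightarrow> x ^ (q ^ N - 1) = c"
    using \<open>c * c = 1\<close> by (rule involution_mult_eq_1_iff)
  finally show ?thesis
    by (simp add: c_def)
qed

lemma funpow_gamma_eq_inverse_iff: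
  assumes "x \<noteq> 0"
  shows "(\<gamma> ^^ N) x = inverse x \<longleftrightarrow> x ^ (q ^ N + 1) = (-1) ^ (e * N)"
proof -
  define c :: 'k where "c = (-1) ^ (e * N)"
  have "c * c = 1"
    by (simp add: c_def flip: power_add)
  have eq: "(\<gamma> ^^ N) x * x = c * x ^ (q ^ N + 1)"
    by (simp add: funpow_gamma c_def mult.assoc mult.commute[of x])
  have "(\<gamma> ^^ N) x = inverse x \<longleftrightarrow> (\<gamma> ^^ N) x * x = 1"
    using assms by (auto simp: field_simps)
  also have "\<dots> \<longleftrightarrow> c * x ^ (q ^ N + 1) = 1"
    by (simp only: eq)
  also have "\<dots> \<longleftrightarrow> x ^ (q ^ N + 1) = c"
    using \<open>c * c = 1\<close> by (rule involution_mult_eq_1_iff)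
  finally show ?thesis
    by (simp add: c_def)
qed

lemma ktri_fixed_points_eq:
  "{l \<in> ktri. (\<gamma> ^^ N) l = l} = {x. x ^ (q ^ N - 1) = (-1) ^ (e * N)} - {0, 1, -1}"
proof (intro set_eqI)
  fix x :: 'k
  show "x \<in> {l \<in> ktri. (\<gamma> ^^ N) l = l} \<longleftrightarrow> x \<in> {x. x ^ (q ^ N - 1) = (-1) ^ (e * N)} - {0, 1, -1}"
  proof (cases "x \<in> {0, 1, -1}")
    case False
    then show ?thesis
      using funpow_gamma_eq_self_iff[of x N] by (simp add: ktri_def)
  qed (auto simp: ktri_def)
qed

lemma ktri_inverse_points_eq:
  "{l \<in> ktri. (\<gamma> ^^ N) l = inverse l} = {x. x ^ (q ^ N + 1) = (-1) ^ (e * N)} - {0, 1, -1}"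
proof (intro set_eqI)
  fix x :: 'k
  show "x \<in> {l \<in> ktri. (\<gamma> ^^ N) l = inverse l}
    \<longleftrightarrow> x \<in> {x. x ^ (q ^ N + 1) = (-1) ^ (e * N)} - {0, 1, -1}"
  proof (cases "x \<in> {0, 1, -1}")
    case False
    then show ?thesis
      using funpow_gamma_eq_inverse_iff[of x N] by (simp add: ktri_def)
  qed (auto simp: ktri_def)
qed

lemma card_roots_pow_q_pow:
  assumes "N > 0"
  shows "card {x::'k. x ^ (q ^ N - 1) = (-1) ^ (e * N)} = q ^ N - 1"
    and "card {x::'k. x ^ (q ^ N + 1) = (-1) ^ (e * N)} = q ^ N + 1"
proof -
  have q_pow: "(of_nat q :: 'k) ^ N = 0"
    using of_nat_q assms by simp
  have "q ^ N \<ge> 1"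
    using odd_pos[OF odd_q] by simp
  then have "of_nat (q ^ N - 1) \<noteq> (0::'k)" and "of_nat (q ^ N + 1) \<noteq> (0::'k)"
    by (simp_all add: of_nat_diff q_pow del: of_nat_eq_0_iff_char_dvd)
  moreover have "(-1::'k) ^ (e * N) \<noteq> 0"
    by simp
  ultimately show "card {x::'k. x ^ (q ^ N - 1) = (-1) ^ (e * N)} = q ^ N - 1"
    and "card {x::'k. x ^ (q ^ N + 1) = (-1) ^ (e * N)} = q ^ N + 1"
    by (blast intro: card_pow_eq_const[OF alg_closed])+
qed

lemma card_fixed_minus_card_inverse:
  assumes "N > 0"
  shows "int (card {l \<in> ktri. (\<gamma> ^^ N) l = l}) - int (card {l \<in> ktri. (\<gamma> ^^ N) l = inverse l}) = -2"
proof -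
  define Q where "Q = q ^ N"
  define F1 :: "'k set" where "F1 = {x. x ^ (Q - 1) = (-1) ^ (e * N)}"
  define F2 :: "'k set" where "F2 = {x. x ^ (Q + 1) = (-1) ^ (e * N)}"
  have "q \<le> Q"
    using assms odd_pos[OF odd_q] by (simp add: Q_def self_le_power)
  then have "odd Q" and "Q \<ge> 2"
    using odd_q q_ge_2 by (simp_all add: Q_def)
  have card_F1: "card F1 = Q - 1" and card_F2: "card F2 = Q + 1"
    unfolding F1_def F2_def Q_def using card_roots_pow_q_pow[OF assms] by simp_all
  then have "finite F1" and "finite F2"
    using \<open>Q \<ge> 2\<close> by (simp_all add: card_ge_0_finite)
  have "F1 \<inter> {0, 1, -1} = F2 \<inter> {0, 1, -1}"
    unfolding F1_def F2_def using \<open>odd Q\<close> \<open>Q \<ge> 2\<close> by (rule roots_pow_pred_succ_trivial)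
  moreover have "int (card (F1 - {0, 1, -1})) = int (Q - 1) - int (card (F1 \<inter> {0, 1, -1}))"
    and "int (card (F2 - {0, 1, -1})) = int (Q + 1) - int (card (F2 \<inter> {0, 1, -1}))"
    using int_card_Diff[OF \<open>finite F1\<close>] int_card_Diff[OF \<open>finite F2\<close>] card_F1 card_F2 by simp_all
  moreover have "int (Q - 1) = int Q - 1"
    using \<open>Q \<ge> 2\<close> by simp
  ultimately show ?thesis
    unfolding ktri_fixed_points_eq ktri_inverse_points_eq Q_def[symmetric] F1_def[symmetric]
      F2_def[symmetric] by simp
qed

lemma fixed_in_short_orbit_points:
  assumes "l \<in> ktri" and "N > 0" and "(\<gamma> ^^ N) l = l"
  shows "l \<in> short_orbit_points (2 * N)"
proof -
  have "period l \<le> N"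
    using assms by (simp add: funpow_gamma_fixed_iff dvd_imp_le)
  then show ?thesis
    using assms(1) card_Orb_le_2_period[of l] by (simp add: short_orbit_points_def)
qed

lemma inverse_in_short_orbit_points:
  assumes "l \<in> ktri" and "N > 0" and "(\<gamma> ^^ N) l = inverse l"
  shows "l \<in> short_orbit_points (2 * N)"
proof -
  have "self_reciprocal l"
    using assms(3) funpow_gamma_in_orb_g[of N l] by (simp add: self_reciprocal_def)
  have "(\<gamma> ^^ (N + N)) l = l"
    using assms(3) by (simp add: funpow_add funpow_gamma_inverse)
  then have "period l dvd 2 * N"
    by (simp add: funpow_gamma_fixed_iff mult_2)
  then have "period l \<le> 2 * N"
    using assms(2) by (simp add: dvd_imp_le)
  then show ?thesis
    using assms(1) \<open>self_reciprocal l\<close> by (simp add: short_orbit_points_def card_Orb_self_reciprocal)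
qed

lemma power_sum_even:
  assumes "N > 0"
  shows "power_sum (2 * N) = -2"
proof -
  have "power_sum (2 * N) = (\<Sum>l\<in>short_orbit_points (2 * N). of_bool ((\<gamma> ^^ N) l = l))
      - (\<Sum>l\<in>short_orbit_points (2 * N). of_bool ((\<gamma> ^^ N) l = inverse l))"
    unfolding power_sum_def sum_subtractf[symmetric]
    by (rule sum.cong) (simp_all add: power_sum_term_even short_orbit_points_def)
  also have "\<dots> = int (card {l \<in> ktri. (\<gamma> ^^ N) l = l})
      - int (card {l \<in> ktri. (\<gamma> ^^ N) l = inverse l})"
  proof -
    have "short_orbit_points (2 * N) \<inter> {l. (\<gamma> ^^ N) l = l} = {l \<in> ktri. (\<gamma> ^^ N) l = l}"
      using fixed_in_short_orbit_points[OF _ assms] by (auto simp: short_orbit_points_def)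
    moreover have "short_orbit_points (2 * N) \<inter> {l. (\<gamma> ^^ N) l = inverse l}
        = {l \<in> ktri. (\<gamma> ^^ N) l = inverse l}"
      using inverse_in_short_orbit_points[OF _ assms] by (auto simp: short_orbit_points_def)
    ultimately show ?thesis
      by (simp add: finite_short_orbit_points)
  qed
  also have "\<dots> = -2"
    by (rule card_fixed_minus_card_inverse[OF assms])
  finally show ?thesis .
qed

lemma power_sum_eq: "k > 0 \<Longrightarrow> power_sum k = (if even k then -2 else 0)"
  by (auto simp: power_sum_odd power_sum_even elim!: evenE)

lemma signed_count_0: "signed_count 0 = 1"
proof -
  have "root_msets 0 = {{#}}"
    by (auto simp: root_msets_def)
  moreover have "j_mset {#} = 0"
    by (simp add: j_mset_def)
  ultimately show ?thesis
    by (simp add: signed_count_def)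
qed

lemma signed_count_eq: "signed_count n = (if n = 0 then 1 else if n = 2 then -1 else 0)"
proof -
  \<comment> \<open>the coefficients of \<open>1 - t\<^sup>2\<close>\<close>
  define b :: "nat \<Rightarrow> int" where "b n = (if n = 0 then 1 else if n = 2 then -1 else 0)" for n
  have "int n * b n = (\<Sum>k=1..n. b (n - k) * power_sum k)" if "n > 0" for n
  proof -
    have "(\<Sum>k=1..n. b (n - k) * power_sum k) = (\<Sum>k=1..n. b (n - k) * (if even k then -2 else 0))"
      by (rule sum.cong) (simp_all add: power_sum_eq)
    also have "\<dots> = int n * b n"
    proof (cases "n \<le> 2")
      case True
      with that have "n = 1 \<or> n = 2"
        by auto
      then show ?thesis
        by (auto simp: b_def numeral_2_eq_2)
    next
      case False
      have "(\<Sum>k=1..n. b (n - k) * (if even k then -2 else 0))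
          = (\<Sum>k\<in>{n - 2, n}. b (n - k) * (if even k then -2 else 0))"
        using False by (intro sum.mono_neutral_right) (auto simp: b_def)
      also have "\<dots> = 0"
        using False by (auto simp: b_def even_diff_nat)
      finally show ?thesis
        using False by (simp add: b_def)
    qed
    finally show ?thesis ..
  qed
  then have "signed_count n = b n"
    using newton_recurrence_unique[of signed_count b power_sum] newton_identity
    by (simp add: signed_count_0 b_def)
  then show ?thesis
    by (simp add: b_def)
qed

end

theorem mainTheorem6:
  fixes q e n :: nat
  assumes "alg_closure_of_Fq TYPE('k::field) q"
    and "odd q"
    and "e < 2"
    and "even n"
  shows "(\<Sum>D\<in>(gA0 q e n :: 'k poly set). (-1::int) ^ jD q e D)
           = (if n \<ge> 4 then 0 else if n = 2 then -1 else 1)"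
proof -
  obtain p m where "m > 0" and "q = p ^ m" and "CHAR('k) = p"
    and alg_closed: "\<forall>P :: 'k poly. degree P \<ge> 1 \<longrightarrow> (\<exists>x. poly P x = 0)"
    and periodic: "\<forall>x :: 'k. \<exists>r > 0. x ^ (q ^ r) = x"
    using assms(1) unfolding alg_closure_of_Fq_def by blast
  then have "of_nat p = (0::'k)"
    by (metis of_nat_CHAR)
  then have "of_nat q = (0::'k)"
    using \<open>m > 0\<close> \<open>q = p ^ m\<close> by simp
  then interpret twisted_frobenius q e "TYPE('k)"
    using assms(2,3) alg_closed periodic by unfold_locales auto
  show ?thesis
    using sum_gA0_eq_signed_count[of n] signed_count_eq[of n] assms(4) by auto
qed

end
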